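(* Let $\mathbf{L}$ be an integral implicative lattice with canonical frame $(X,\perp,Y,T)$. Then the map $a\mapsto X_a=\{x\in X: a\in x\}$ is an isomorphism of integral implicative lattices from $\mathbf L$ onto $\mathrm{KO}\mathcal{G}(X)$, the algebra of compact-open stable subsets of $X$ with operations $\cap$, the join of $\mathcal G(X)$, and $\Rightarrow$; in particular $X_a\Rightarrow X_b=X_{a\to b}$.
   Context: An integral implicative lattice is a bounded lattice with binary $\to$ satisfying (A1) $(a\vee b)\to c=(a\to c)\wedge(b\to c)$, (A2) $a\to(b\wedge c)=(a\to b)\wedge(a\to c)$, (A3) $a\le b$ iff $1\le a\to b$. The canonical frame of $\mathbf L$: $X$ is the set of filters of $\mathbf L$, $Y$ the set of ideals, $x\perp y$ iff $x\cap y\neq\emptyset$; for $x\in X,v\in Y$, $x\leadsto v$ is the ideal generated by $\{a\to b:a\in x,b\in v\}$, and $yTxv$ iff $x\leadsto v\subseteq y$. For $U\subseteq X$, $U'=\{y\in Y:\forall x\in U\ x\perp y\}$; for $V\subseteq Y$, ${}'V=\{x\in X:\forall y\in V\ x\perp y\}$; $A\subseteq X$ is stable if $A={}'(A')$, $B\subseteq Y$ co-stable if $B=({}'B)'$; $\mathcal G(X)$ is the complete lattice of stable sets (meet is intersection, join of $A,C$ is ${}'((A\cup C)')$). For $A\in\mathcal G(X)$ and co-stable $B$: $A\blacktriangleright B=(\{y:\exists x\in A\,\exists v\in B\ yTxv\})''$ and for $A,C\in\mathcal G(X)$: $A\Rightarrow C={}'(A\blacktriangleright C')$. $X$ carries the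 (spectral) topology generated by the basis $\{X_a:a\in L\}$; $\mathrm{KO}\mathcal G(X)$ is the set of stable sets that are compact and open in this topology. *)

theory Defs
  imports "HOL-Analysis.Analysis"
begin

definition integral_implicative_lattice :: "('a::bounded_lattice \<Rightarrow> 'a \<Rightarrow> 'a) \<Rightarrow> bool" where
  "integral_implicative_lattice imp \<longleftrightarrow>
     (\<forall>a b c. imp (sup a b) c = inf (imp a c) (imp b c)) \<and>
     (\<forall>a b c. imp a (inf b c) = inf (imp a b) (imp a c)) \<and>
     (\<forall>a b. a \<le> b \<longleftrightarrow> top \<le> imp a b)"

text \<open>Filters and ideals (nonempty; the improper ones are included).\<close>
definition is_filter :: "'a::bounded_lattice set \<Rightarrow> bool" where
  "is_filter F \<longleftrightarrow> F \<noteq> {} \<and> (\<forall>a\<in>F. \<forall>b. a \<le> b \<longrightarrow> b \<in> F) \<and> (\<forall>a\<in>F. \<forall>b\<in>F. inf a b \<in> F)"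

definition is_ideal :: "'a::bounded_lattice set \<Rightarrow> bool" where
  "is_ideal I \<longleftrightarrow> I \<noteq> {} \<and> (\<forall>a\<in>I. \<forall>b. b \<le> a \<longrightarrow> b \<in> I) \<and> (\<forall>a\<in>I. \<forall>b\<in>I. sup a b \<in> I)"

definition Xs :: "'a::bounded_lattice set set" where
  "Xs = {F. is_filter F}"

definition Ys :: "'a::bounded_lattice set set" where
  "Ys = {I. is_ideal I}"

definition perp :: "'a set \<Rightarrow> 'a set \<Rightarrow> bool" where
  "perp x y \<longleftrightarrow> x \<inter> y \<noteq> {}"

definition ideal_gen :: "'a::bounded_lattice set \<Rightarrow> 'a set" where
  "ideal_gen S = \<Inter>{I. is_ideal I \<and> S \<subseteq> I}"

definition leadsto :: "('a::bounded_lattice \<Rightarrow> 'a \<Rightarrow> 'a) \<Rightarrow> 'a set \<Rightarrow> 'a set \<Rightarrow> 'a set" where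
  "leadsto imp x v = ideal_gen {imp a b | a b. a \<in> x \<and> b \<in> v}"

definition Trel :: "('a::bounded_lattice \<Rightarrow> 'a \<Rightarrow> 'a) \<Rightarrow> 'a set \<Rightarrow> 'a set \<Rightarrow> 'a set \<Rightarrow> bool" where
  "Trel imp y x v \<longleftrightarrow> leadsto imp x v \<subseteq> y"

definition upol :: "'a::bounded_lattice set set \<Rightarrow> 'a set set" where
  "upol U = {y \<in> Ys. \<forall>x\<in>U. perp x y}"

definition lpol :: "'a::bounded_lattice set set \<Rightarrow> 'a set set" where
  "lpol V = {x \<in> Xs. \<forall>y\<in>V. perp x y}"

definition stable :: "'a::bounded_lattice set set \<Rightarrow> bool" where
  "stable A \<longleftrightarrow> A \<subseteq> Xs \<and> A = lpol (upol A)"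

definition Gjoin :: "'a::bounded_lattice set set \<Rightarrow> 'a set set \<Rightarrow> 'a set set" where
  "Gjoin A C = lpol (upol (A \<union> C))"

definition blacktri :: "('a::bounded_lattice \<Rightarrow> 'a \<Rightarrow> 'a) \<Rightarrow> 'a set set \<Rightarrow> 'a set set \<Rightarrow> 'a set set" where
  "blacktri imp A B = upol (lpol {y \<in> Ys. \<exists>x\<in>A. \<exists>v\<in>B. Trel imp y x v})"

definition Gimp :: "('a::bounded_lattice \<Rightarrow> 'a \<Rightarrow> 'a) \<Rightarrow> 'a set set \<Rightarrow> 'a set set \<Rightarrow> 'a set set" where
  "Gimp imp A C = lpol (blacktri imp A (upol C))"

definition Xa :: "'a::bounded_lattice \<Rightarrow> 'a set set" where
  "Xa a = {x \<in> Xs. a \<in> x}"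

definition spectral_top :: "'a::bounded_lattice set topology" where
  "spectral_top = subtopology (topology_generated_by (range Xa)) Xs"

definition KOG :: "'a::bounded_lattice set set set" where
  "KOG = {A. stable A \<and> compactin spectral_top A \<and> openin spectral_top A}"

end

theory Submission
  imports Defs
begin

text \<open>The principal filter \<open>{a..}\<close> and the principal ideal \<open>{..a}\<close> serve as witnesses
  throughout. They show that \<open>X\<^sub>a\<close> is the lower polar of the set \<open>Y\<^sub>a\<close> of ideals
  containing \<open>a\<close> and that \<open>Y\<^sub>a\<close> is the upper polar of \<open>X\<^sub>a\<close>, so \<open>X\<^sub>a\<close> is stable. The
  operations are then computed on the ideal side: an ideal contains \<open>a \<squnion> b\<close> iff it
  contains \<open>a\<close> and \<open>b\<close>, and an ideal lies above some \<open>x \<leadsto> v\<close> with \<open>a \<in> x\<close>, \<open>b \<in> v\<close>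
  iff it contains \<open>a \<rightarrow> b\<close>, by monotonicity of \<open>\<rightarrow>\<close> and taking \<open>x = {a..}\<close>,
  \<open>v = {..b}\<close>. Each \<open>X\<^sub>a\<close> is compact because any open set containing the point \<open>{a..}\<close>
  contains all of \<open>X\<^sub>a\<close>. Conversely a compact open set is a finite union of basic sets
  \<open>X\<^sub>c\<close>, and if it is also stable it equals \<open>X\<^sub>s\<close> for the join \<open>s\<close> of those \<open>c\<close>.\<close>

definition Ya :: "'a::bounded_lattice \<Rightarrow> 'a set set" where
  "Ya a = {y \<in> Ys. a \<in> y}"

lemma is_filter_atLeast: "is_filter {a..}"
  unfolding is_filter_def by auto

lemma is_ideal_atMost: "is_ideal {..a}"
  unfolding is_ideal_def by auto

lemma filter_upward: "is_filter F \<Longrightarrow> a \<in> F \<Longrightarrow> a \<le> b \<Longrightarrow> b \<in> F"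
  unfolding is_filter_def by blast

lemma ideal_downward: "is_ideal I \<Longrightarrow> a \<in> I \<Longrightarrow> b \<le> a \<Longrightarrow> b \<in> I"
  unfolding is_ideal_def by blast

lemma filter_top: "is_filter F \<Longrightarrow> top \<in> F"
  unfolding is_filter_def by (auto intro: top_greatest)

lemma ideal_bot: "is_ideal I \<Longrightarrow> bot \<in> I"
  unfolding is_ideal_def by (auto intro: bot_least)

lemma filter_inf_iff: "is_filter F \<Longrightarrow> inf a b \<in> F \<longleftrightarrow> a \<in> F \<and> b \<in> F"
  unfolding is_filter_def by (metis inf_sup_ord(1,2))

lemma ideal_sup_iff: "is_ideal I \<Longrightarrow> sup a b \<in> I \<longleftrightarrow> a \<in> I \<and> b \<in> I"
  unfolding is_ideal_def by (metis sup_ge1 sup_ge2)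

lemma atLeast_in_Xa: "{a..} \<in> Xa a"
  using is_filter_atLeast unfolding Xa_def Xs_def by auto

lemma atMost_in_Ya: "{..a} \<in> Ya a"
  using is_ideal_atMost unfolding Ya_def Ys_def by auto

lemma Xa_mono: "a \<le> b \<Longrightarrow> Xa a \<subseteq> Xa b"
  unfolding Xa_def Xs_def by (auto intro: filter_upward)

lemma upol_Xa: "upol (Xa a) = Ya a"
proof
  show "upol (Xa a) \<subseteq> Ya a"
  proof
    fix y assume y: "y \<in> upol (Xa a)"
    then obtain b where "b \<in> y" "a \<le> b"
      using atLeast_in_Xa unfolding upol_def perp_def by blast
    with y show "y \<in> Ya a"
      using ideal_downward unfolding upol_def Ya_def Ys_def by blast
  qed
qed (auto simp: upol_def Ya_def Xa_def perp_def)

lemma lpol_Ya: "lpol (Ya a) = Xa a"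
proof
  show "lpol (Ya a) \<subseteq> Xa a"
  proof
    fix x assume x: "x \<in> lpol (Ya a)"
    then obtain b where "b \<in> x" "b \<le> a"
      using atMost_in_Ya unfolding lpol_def perp_def by blast
    with x show "x \<in> Xa a"
      using filter_upward unfolding lpol_def Xa_def Xs_def by blast
  qed
qed (auto simp: lpol_def Ya_def Xa_def perp_def)

lemma stable_Xa: "stable (Xa a)"
  unfolding stable_def upol_Xa lpol_Ya by (auto simp: Xa_def)

lemma upol_Un: "upol (A \<union> B) = upol A \<inter> upol B"
  unfolding upol_def by auto

lemma upol_Xa_Un: "upol (Xa a \<union> Xa b) = upol (Xa (sup a b))"
  unfolding upol_Un upol_Xa by (auto simp: Ya_def Ys_def ideal_sup_iff)

lemma Xa_inf: "Xa (inf a b) = Xa a \<inter> Xa b"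
  unfolding Xa_def Xs_def by (auto simp: filter_inf_iff)

lemma Xa_sup: "Xa (sup a b) = Gjoin (Xa a) (Xa b)"
  unfolding Gjoin_def upol_Xa_Un upol_Xa lpol_Ya ..

lemma Xa_top: "Xa top = Xs"
  unfolding Xa_def Xs_def by (auto simp: filter_top)

lemma Ya_bot: "Ya bot = Ys"
  unfolding Ya_def Ys_def by (auto simp: ideal_bot)

lemma Xa_bot: "Xa bot = lpol Ys"
  by (simp add: lpol_Ya flip: Ya_bot)

lemma inj_Xa: "inj Xa"
proof (rule injI)
  fix a b :: "'a::bounded_lattice" assume "Xa a = Xa b"
  then have "{a..} \<in> Xa b" "{b..} \<in> Xa a"
    using atLeast_in_Xa by metis+
  then show "a = b"
    unfolding Xa_def by (auto intro: order_antisym)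
qed

lemma integral_implicative_lattice_imp_mono:
  assumes "integral_implicative_lattice imp" "c \<le> a" "b \<le> d"
  shows "imp a b \<le> imp c d"
proof -
  have A1: "\<And>a b c. imp (sup a b) c = inf (imp a c) (imp b c)"
   and A2: "\<And>a b c. imp a (inf b c) = inf (imp a b) (imp a c)"
    using assms(1) unfolding integral_implicative_lattice_def by auto
  have "imp a b = imp (sup c a) b"
    using assms(2) by (simp add: sup_absorb2)
  also have "\<dots> \<le> imp c b"
    by (simp add: A1)
  also have "\<dots> = imp c (inf b d)"
    using assms(3) by (simp add: inf_absorb1)
  also have "\<dots> \<le> imp c d"
    by (simp add: A2)
  finally show ?thesis .
qed

lemma leadsto_atLeast_atMost:
  assumes "\<And>a b c d. c \<le> a \<Longrightarrow> b \<le> d \<Longrightarrow> imp a b \<le> imp c d"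
  shows "leadsto imp {a..} {..b} \<subseteq> {..imp a b}"
  unfolding leadsto_def ideal_gen_def
  using is_ideal_atMost assms by blast

lemma imp_in_leadsto: "a \<in> x \<Longrightarrow> b \<in> v \<Longrightarrow> imp a b \<in> leadsto imp x v"
  unfolding leadsto_def ideal_gen_def by blast

lemma Trel_Xa_Ya:
  assumes "\<And>a b c d. c \<le> a \<Longrightarrow> b \<le> d \<Longrightarrow> imp a b \<le> imp c d"
  shows "{y \<in> Ys. \<exists>x\<in>Xa a. \<exists>v\<in>Ya b. Trel imp y x v} = Ya (imp a b)"
proof
  show "{y \<in> Ys. \<exists>x\<in>Xa a. \<exists>v\<in>Ya b. Trel imp y x v} \<subseteq> Ya (imp a b)"
    unfolding Trel_def Xa_def Ya_def using imp_in_leadsto by blast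
next
  show "Ya (imp a b) \<subseteq> {y \<in> Ys. \<exists>x\<in>Xa a. \<exists>v\<in>Ya b. Trel imp y x v}"
  proof
    fix y assume y: "y \<in> Ya (imp a b)"
    then have "{..imp a b} \<subseteq> y"
      using ideal_downward unfolding Ya_def Ys_def by blast
    then have "Trel imp y {a..} {..b}"
      unfolding Trel_def using leadsto_atLeast_atMost[of imp, OF assms] by blast
    then show "y \<in> {y \<in> Ys. \<exists>x\<in>Xa a. \<exists>v\<in>Ya b. Trel imp y x v}"
      using y atLeast_in_Xa atMost_in_Ya unfolding Ya_def by blast
  qed
qed

text \<open>Only the monotonicity of \<open>\<rightarrow>\<close> enters here.\<close>
lemma Xa_imp:
  assumes "\<And>a b c d. c \<le> a \<Longrightarrow> b \<le> d \<Longrightarrow> imp a b \<le> imp c d"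
  shows "Xa (imp a b) = Gimp imp (Xa a) (Xa b)"
  using Trel_Xa_Ya[of imp a b, OF assms]
  by (simp add: Gimp_def blacktri_def upol_Xa lpol_Ya)

lemma generate_topology_on_Xa_basic_nbhd:
  assumes "generate_topology_on (range Xa) W" "x \<in> W \<inter> Xs"
  shows "\<exists>c. x \<in> Xa c \<and> Xa c \<subseteq> W"
  using assms
proof (induction arbitrary: x)
  case (Int W W')
  then obtain c d where "x \<in> Xa c" "Xa c \<subseteq> W" "x \<in> Xa d" "Xa d \<subseteq> W'"
    by blast
  then show ?case
    using Xa_inf by (metis Int_iff Int_mono)
qed blast+

lemma openin_spectral_top_basic_nbhd:
  assumes "openin spectral_top U" "x \<in> U"
  shows "\<exists>c. x \<in> Xa c \<and> Xa c \<subseteq> U"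
proof -
  obtain W where W: "generate_topology_on (range Xa) W" "U = W \<inter> Xs"
    using assms(1)
    unfolding spectral_top_def openin_subtopology openin_topology_generated_by_iff by blast
  then obtain c where "x \<in> Xa c" "Xa c \<subseteq> W"
    using generate_topology_on_Xa_basic_nbhd assms(2) by blast
  with W show ?thesis
    unfolding Xa_def by blast
qed

lemma openin_Xa: "openin spectral_top (Xa a)"
  unfolding spectral_top_def openin_subtopology openin_topology_generated_by_iff
  by (rule exI[of _ "Xa a"]) (auto intro: generate_topology_on.Basis simp: Xa_def)

lemma topspace_spectral_top: "topspace spectral_top = Xs"
  unfolding spectral_top_def using filter_top by (auto simp: Xa_def Xs_def)

lemma openin_atLeast_imp_Xa_subset:
  assumes "openin spectral_top U" "{a..} \<in> U"
  shows "Xa a \<subseteq> U"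
proof -
  obtain c where c: "{a..} \<in> Xa c" "Xa c \<subseteq> U"
    using openin_spectral_top_basic_nbhd[OF assms] by blast
  then have "Xa a \<subseteq> Xa c"
    by (intro Xa_mono) (simp add: Xa_def)
  with c show ?thesis
    by blast
qed

lemma compactin_Xa: "compactin spectral_top (Xa a)"
  unfolding compactin_def
proof (intro conjI allI impI)
  show "Xa a \<subseteq> topspace spectral_top"
    unfolding topspace_spectral_top Xa_def by auto
next
  fix \<U> assume \<U>: "(\<forall>U\<in>\<U>. openin spectral_top U) \<and> Xa a \<subseteq> \<Union>\<U>"
  then obtain U where U: "U \<in> \<U>" "{a..} \<in> U"
    using atLeast_in_Xa[of a] by blast
  with \<U> have "Xa a \<subseteq> U"
    by (simp add: openin_atLeast_imp_Xa_subset)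
  with U show "\<exists>\<F>. finite \<F> \<and> \<F> \<subseteq> \<U> \<and> Xa a \<subseteq> \<Union>\<F>"
    by (intro exI[of _ "{U}"]) auto
qed

lemma compact_openin_finite_Union_Xa:
  assumes "compactin spectral_top A" "openin spectral_top A"
  shows "\<exists>C. finite C \<and> A = \<Union> (Xa ` C)"
proof -
  have "A \<subseteq> \<Union> (Xa ` {c. Xa c \<subseteq> A})"
    using openin_spectral_top_basic_nbhd[OF assms(2)] by blast
  moreover have "\<forall>U \<in> Xa ` {c. Xa c \<subseteq> A}. openin spectral_top U"
    using openin_Xa by blast
  ultimately obtain \<F> where \<F>: "finite \<F>" "\<F> \<subseteq> Xa ` {c. Xa c \<subseteq> A}" "A \<subseteq> \<Union>\<F>"
    using assms(1) unfolding compactin_def by meson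
  then obtain C where "C \<subseteq> {c. Xa c \<subseteq> A}" "finite C" "\<F> = Xa ` C"
    using finite_subset_image[OF \<F>(1,2)] by blast
  with \<F>(3) show ?thesis
    by blast
qed

lemma upol_finite_Union_Xa:
  assumes "finite C"
  shows "\<exists>s. upol (\<Union> (Xa ` C)) = upol (Xa s)"
  using assms
proof (induction rule: finite_induct)
  case empty
  have "upol {} = upol (Xa bot)"
    unfolding upol_Xa Ya_bot by (simp add: upol_def)
  then show ?case
    by auto
next
  case (insert c C)
  then obtain s where "upol (\<Union> (Xa ` C)) = upol (Xa s)"
    by blast
  then have "upol (\<Union> (Xa ` insert c C)) = upol (Xa (sup c s))"
    by (simp add: upol_Un flip: upol_Xa_Un)
  then show ?case
    by blast
qed

lemma KOG_eq_range_Xa: "(KOG :: 'a::bounded_lattice set set set) = range Xa"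
proof
  show "(KOG :: 'a set set set) \<subseteq> range Xa"
  proof
    fix A :: "'a set set" assume "A \<in> KOG"
    then have A: "stable A" "compactin spectral_top A" "openin spectral_top A"
      unfolding KOG_def by auto
    then obtain C where "finite C" "A = \<Union> (Xa ` C)"
      using compact_openin_finite_Union_Xa by blast
    then obtain s where "upol A = upol (Xa s)"
      using upol_finite_Union_Xa by blast
    have "A = lpol (upol A)"
      using A(1) unfolding stable_def by blast
    also have "\<dots> = Xa s"
      using \<open>upol A = upol (Xa s)\<close> by (simp add: upol_Xa lpol_Ya)
    finally show "A \<in> range Xa"
      by blast
  qed
qed (auto simp: KOG_def stable_Xa compactin_Xa openin_Xa)

theorem proposition4p3:
  fixes imp :: "'a::bounded_lattice \<Rightarrow> 'a \<Rightarrow> 'a"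
  assumes "integral_implicative_lattice imp"
  shows "bij_betw Xa (UNIV :: 'a set) (KOG :: 'a set set set)
    \<and> (\<forall>a b :: 'a. Xa (inf a b) = Xa a \<inter> Xa b)
    \<and> (\<forall>a b :: 'a. Xa (sup a b) = Gjoin (Xa a) (Xa b))
    \<and> (\<forall>a b :: 'a. Xa (imp a b) = Gimp imp (Xa a) (Xa b))
    \<and> Xa (top :: 'a) = (Xs :: 'a set set)
    \<and> Xa (bot :: 'a) = lpol (Ys :: 'a set set)"
proof -
  have "bij_betw Xa (UNIV :: 'a set) KOG"
    by (simp add: bij_betw_def inj_Xa KOG_eq_range_Xa)
  moreover have "Xa (imp a b) = Gimp imp (Xa a) (Xa b)" for a b
    using Xa_imp integral_implicative_lattice_imp_mono[OF assms] by blast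
  ultimately show ?thesis
    by (simp add: Xa_inf Xa_sup Xa_top Xa_bot)
qed

end
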